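(* Fix $\alpha>1$, a Pufferfish scenario $(\mathcal S,\mathcal Q,\Theta)$ and a slice profile $(\mathcal U,\omega)$. If a mechanism $\mathcal M$ satisfies $(\alpha,\epsilon,\omega)$-Ave-SRPP in $(\mathcal S,\mathcal Q,\Theta)$, then for any $\delta\in(0,1)$ it satisfies $(\epsilon',\delta,\omega)$-Ave-SPP in $(\mathcal S,\mathcal Q,\Theta)$ with $\epsilon'=\epsilon+\frac{\log(1/\delta)}{\alpha-1}$.
   Context: Pufferfish scenario: secrets $\mathcal S$, pairs $\mathcal Q\subseteq\mathcal S\times\mathcal S$, priors $\Theta$, each a joint law of secret $S$ and dataset $X$ with secret marginal $P^S_\theta$; $\mathcal M^\theta_s$ is the law of $\mathcal M(X)\in\mathbb R^d$ given $S=s$ under $\theta$. Slice profile: $\mathcal U\subseteq\mathbb S^{d-1}$, $\omega$ a probability measure on the unit sphere supported on $\mathcal U$; $\Psi^u(a)=\langle a,u\rangle$, $\Psi^u_\#$ pushforward. $\mathtt D_\alpha$ is R\'enyi divergence. $\mathcal M$ is $(\alpha,\epsilon,\omega)$-Ave-SRPP if $\int\mathtt D_\alpha(\Psi^u_\#\mathcal M^\theta_{s_i}\|\Psi^u_\#\mathcal M^\theta_{s_j})\,d\omega(u)\le\epsilon$ for all $\theta\in\Theta$ and $(s_i,s_j)\in\mathcal Q$ with $P^S_\theta(s_i),P^S_\theta(s_j)>0$. Approximate max-divergence: $\mathtt D^\delta_\infty(P\|Q)=\inf\{\varepsilon\ge0:\ P(A)\le e^\varepsilon Q(A)+\delta\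 \text{for all measurable }A\}$. $\mathcal M$ is $(\varepsilon,\delta,\omega)$-Ave-SPP if $\int\mathtt D^\delta_\infty(\Psi^u_\#\mathcal M^\theta_{s_i}\|\Psi^u_\#\mathcal M^\theta_{s_j})\,d\omega(u)\le\varepsilon$ for all such $\theta$ and $(s_i,s_j)$. *)

theory Defs
  imports "HOL-Probability.Probability"
begin

definition renyi_div :: "real \<Rightarrow> 'b measure \<Rightarrow> 'b measure \<Rightarrow> ereal" where
  "renyi_div \<alpha> P Q =
     (if absolutely_continuous Q P then
        (let I = (\<integral>\<^sup>+ x. ennreal (enn2real (RN_deriv Q P x) powr \<alpha>) \<partial>Q)
         in if I = \<infinity> then \<infinity> else ereal (ln (enn2real I) / (\<alpha> - 1)))
      else \<infinity>)"

text \<open>Approximate max-divergence; the infimum of the empty set is infinity.\<close>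
definition approx_max_div :: "real \<Rightarrow> 'b measure \<Rightarrow> 'b measure \<Rightarrow> ereal" where
  "approx_max_div \<delta> P Q =
     Inf {ereal \<epsilon> | \<epsilon>. \<epsilon> \<ge> 0 \<and>
            (\<forall>A \<in> sets P. measure P A \<le> exp \<epsilon> * measure Q A + \<delta>)}"

definition slice_push :: "'a::euclidean_space \<Rightarrow> 'a measure \<Rightarrow> real measure" where
  "slice_push u N = distr N borel (\<lambda>a. a \<bullet> u)"

text \<open>A prior theta is a joint law of (secret, dataset) on 's \<times> 'x. Secret marginal:\<close>
definition secret_marg :: "('s \<times> 'x) measure \<Rightarrow> 's \<Rightarrow> real" where
  "secret_marg \<theta> s = measure \<theta> {p \<in> space \<theta>. fst p = s}"

text \<open>Law of the mechanism output M(X) given S = s under theta (M is a Markov kernel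
  from datasets to output distributions).\<close>
definition cond_out :: "('s \<times> 'x) measure \<Rightarrow> ('x \<Rightarrow> 'a measure) \<Rightarrow> 's \<Rightarrow> 'a measure" where
  "cond_out \<theta> M s = uniform_measure \<theta> {p \<in> space \<theta>. fst p = s} \<bind> (\<lambda>p. M (snd p))"

definition ave_SRPP ::
  "real \<Rightarrow> real \<Rightarrow> 'a::euclidean_space measure \<Rightarrow> ('s \<times> 's) set \<Rightarrow> ('s \<times> 'x) measure set
     \<Rightarrow> ('x \<Rightarrow> 'a measure) \<Rightarrow> bool" where
  "ave_SRPP \<alpha> \<epsilon> \<omega> Q \<Theta> M \<longleftrightarrow>
     (\<forall>\<theta> \<in> \<Theta>. \<forall>(si, sj) \<in> Q. secret_marg \<theta> si > 0 \<longrightarrow> secret_marg \<theta> sj > 0 \<longrightarrow>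
        enn2ereal (\<integral>\<^sup>+ u. e2ennreal (renyi_div \<alpha> (slice_push u (cond_out \<theta> M si))
                                             (slice_push u (cond_out \<theta> M sj))) \<partial>\<omega>)
          \<le> ereal \<epsilon>)"

definition ave_SPP ::
  "real \<Rightarrow> real \<Rightarrow> 'a::euclidean_space measure \<Rightarrow> ('s \<times> 's) set \<Rightarrow> ('s \<times> 'x) measure set
     \<Rightarrow> ('x \<Rightarrow> 'a measure) \<Rightarrow> bool" where
  "ave_SPP \<epsilon> \<delta> \<omega> Q \<Theta> M \<longleftrightarrow>
     (\<forall>\<theta> \<in> \<Theta>. \<forall>(si, sj) \<in> Q. secret_marg \<theta> si > 0 \<longrightarrow> secret_marg \<theta> sj > 0 \<longrightarrow>
        enn2ereal (\<integral>\<^sup>+ u. e2ennreal (approx_max_div \<delta> (slice_push u (cond_out \<theta> M si))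
                                             (slice_push u (cond_out \<theta> M sj))) \<partial>\<omega>)
          \<le> ereal \<epsilon>)"

end

theory Submission
  imports Defs
begin

text \<open>Let \<open>\<rho>\<close> be the density of \<open>P\<close> with respect to \<open>Q\<close>. For every threshold \<open>K > 0\<close>
  one has \<open>\<rho> \<cdot> 1\<^sub>A \<le> K \<cdot> 1\<^sub>A + K\<^bsup>1-\<alpha>\<^esup> \<rho>\<^sup>\<alpha>\<close> pointwise, hence
  \<open>P(A) \<le> K Q(A) + K\<^bsup>1-\<alpha>\<^esup> \<integral>\<rho>\<^sup>\<alpha> dQ\<close>, and \<open>\<integral>\<rho>\<^sup>\<alpha> dQ = exp((\<alpha>-1) D)\<close> where \<open>D\<close> is the
  Renyi divergence. Taking \<open>K = exp(D + log(1/\<delta>)/(\<alpha>-1))\<close> makes the second term \<open>\<delta>\<close>, so on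
  every slice the \<open>\<delta>\<close>-approximate max-divergence is at most the Renyi divergence plus
  \<open>log(1/\<delta>)/(\<alpha>-1)\<close>; integrating this over \<open>\<omega>\<close> gives the claim.\<close>

lemma nn_integral_add_const_le:
  "(\<integral>\<^sup>+x. f x + c \<partial>M) \<le> (\<integral>\<^sup>+x. f x \<partial>M) + c * emeasure M (space M)"
proof (cases "c = \<infinity>")
  case True
  have "(\<integral>\<^sup>+x. f x + c \<partial>M) \<le> (\<integral>\<^sup>+x. \<infinity> \<partial>M)"
    by (intro nn_integral_mono) simp
  then show ?thesis
    using True by (simp add: add_increasing)
next
  case False
  have "integral\<^sup>S M g \<le> (\<integral>\<^sup>+x. f x \<partial>M) + c * emeasure M (space M)"
    if g: "simple_function M g" "g \<le> (\<lambda>x. f x + c)" for g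
  proof -
    have simple: "simple_function M (\<lambda>x. g x - c)"
      using simple_function_compose[OF g(1), of "\<lambda>y. y - c"] by (simp add: o_def)
    have le_f: "g x - c \<le> f x" for x
      using g(2) False by (simp add: le_fun_def add.commute ennreal_minus_le_iff)
    have "integral\<^sup>S M g = (\<integral>\<^sup>+x. g x \<partial>M)"
      by (simp add: nn_integral_eq_simple_integral g(1))
    also have "\<dots> \<le> (\<integral>\<^sup>+x. (g x - c) + c \<partial>M)"
      by (intro nn_integral_mono) (use diff_add_self_ennreal in auto)
    also have "\<dots> = (\<integral>\<^sup>+x. g x - c \<partial>M) + c * emeasure M (space M)"
      using simple by (subst nn_integral_add) (auto intro: borel_measurable_simple_function)
    also have "\<dots> \<le> (\<integral>\<^sup>+x. f x \<partial>M) + c * emeasure M (space M)"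
      by (intro add_right_mono nn_integral_mono le_f)
    finally show ?thesis .
  qed
  then show ?thesis
    unfolding nn_integral_def[of M "\<lambda>x. f x + c"] by (auto intro!: SUP_least)
qed

lemma mult_le_threshold_plus_powr:
  fixes \<rho> K \<alpha> i :: real
  assumes "0 \<le> \<rho>" "0 < K" "1 \<le> \<alpha>" "0 \<le> i" "i \<le> 1"
  shows "\<rho> * i \<le> K * i + K powr (1 - \<alpha>) * \<rho> powr \<alpha>"
proof (cases "\<rho> \<le> K")
  case True
  then have "\<rho> * i \<le> K * i"
    using assms(4) by (rule mult_right_mono)
  then show ?thesis
    by (simp add: add_increasing2)
next
  case False
  then have "\<rho> > 0"
    using assms(2) by simp
  have "\<rho> * i \<le> \<rho>"
    using \<open>\<rho> > 0\<close> assms(5) by (simp add: mult_left_le)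
  also have "\<dots> = \<rho> powr \<alpha> * \<rho> powr (1 - \<alpha>)"
    using \<open>\<rho> > 0\<close> by (simp add: powr_add[symmetric])
  also have "\<dots> \<le> \<rho> powr \<alpha> * K powr (1 - \<alpha>)"
    using False assms by (intro mult_left_mono powr_mono2') auto
  finally show ?thesis
    using assms(2,4) by (simp add: mult.commute add_increasing)
qed

lemma emeasure_le_threshold_plus_moment:
  fixes P Q :: "'b measure"
  assumes "sigma_finite_measure P" "sigma_finite_measure Q"
    and ac: "absolutely_continuous Q P" and sets_eq: "sets P = sets Q"
    and "0 < K" "1 \<le> \<alpha>" and A: "A \<in> sets P"
  shows "emeasure P A \<le> ennreal K * emeasure Q A
           + ennreal (K powr (1 - \<alpha>)) * (\<integral>\<^sup>+x. ennreal (enn2real (RN_deriv Q P x) powr \<alpha>) \<partial>Q)"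
proof -
  interpret Q: sigma_finite_measure Q by fact
  let ?\<rho> = "\<lambda>x. enn2real (RN_deriv Q P x)"
  have "AE x in Q. RN_deriv Q P x \<noteq> \<infinity>"
    using Q.RN_deriv_finite assms(1) ac sets_eq by blast
  then have "AE x in Q. RN_deriv Q P x * indicator A x = ennreal (?\<rho> x * indicator A x)"
    by eventually_elim (auto simp: ennreal_enn2real_if indicator_def)
  then have "emeasure P A = (\<integral>\<^sup>+x. ennreal (?\<rho> x * indicator A x) \<partial>Q)"
    using A sets_eq Q.density_RN_deriv[OF ac sets_eq]
    by (metis emeasure_density borel_measurable_RN_deriv nn_integral_cong_AE)
  also have "\<dots> \<le> (\<integral>\<^sup>+x. ennreal K * indicator A x + ennreal (K powr (1 - \<alpha>)) * ennreal (?\<rho> x powr \<alpha>) \<partial>Q)"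
  proof (intro nn_integral_mono)
    fix x
    have "?\<rho> x * indicator A x \<le> K * indicator A x + K powr (1 - \<alpha>) * ?\<rho> x powr \<alpha>"
      using assms(5,6) by (intro mult_le_threshold_plus_powr) auto
    then have "ennreal (?\<rho> x * indicator A x)
        \<le> ennreal (K * indicator A x + K powr (1 - \<alpha>) * ?\<rho> x powr \<alpha>)"
      by (rule ennreal_leI)
    also have "\<dots> = ennreal K * indicator A x + ennreal (K powr (1 - \<alpha>)) * ennreal (?\<rho> x powr \<alpha>)"
      using assms(5) by (simp add: ennreal_plus ennreal_mult' indicator_def)
    finally show "ennreal (?\<rho> x * indicator A x)
        \<le> ennreal K * indicator A x + ennreal (K powr (1 - \<alpha>)) * ennreal (?\<rho> x powr \<alpha>)" .
  qed
  also have "\<dots> = ennreal K * emeasure Q A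
      + ennreal (K powr (1 - \<alpha>)) * (\<integral>\<^sup>+x. ennreal (?\<rho> x powr \<alpha>) \<partial>Q)"
    using A sets_eq by (subst nn_integral_add) (auto simp: nn_integral_cmult)
  finally show ?thesis .
qed

lemma renyi_div_finiteE:
  assumes "1 < \<alpha>" and "renyi_div \<alpha> P Q \<noteq> \<infinity>"
  obtains D where "renyi_div \<alpha> P Q = ereal D" and "absolutely_continuous Q P"
    and "(\<integral>\<^sup>+x. ennreal (enn2real (RN_deriv Q P x) powr \<alpha>) \<partial>Q) \<le> ennreal (exp ((\<alpha> - 1) * D))"
proof -
  define I where "I = (\<integral>\<^sup>+x. ennreal (enn2real (RN_deriv Q P x) powr \<alpha>) \<partial>Q)"
  define D where "D = ln (enn2real I) / (\<alpha> - 1)"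
  have ac: "absolutely_continuous Q P" and "I \<noteq> \<infinity>"
    using assms(2) unfolding renyi_div_def I_def[symmetric] by (auto simp: Let_def split: if_splits)
  then have "renyi_div \<alpha> P Q = ereal D"
    unfolding renyi_div_def I_def[symmetric] D_def by (simp add: Let_def)
  moreover have "I \<le> ennreal (exp ((\<alpha> - 1) * D))"
  proof (cases "enn2real I = 0")
    case True
    then show ?thesis
      using \<open>I \<noteq> \<infinity>\<close> by (simp add: enn2real_eq_0_iff)
  next
    case False
    then have "0 < enn2real I"
      using enn2real_nonneg[of I] by linarith
    then have "exp ((\<alpha> - 1) * D) = enn2real I"
      using assms(1) by (simp add: D_def)
    then show ?thesis
      using \<open>I \<noteq> \<infinity>\<close> by (simp add: ennreal_enn2real_if)
  qed
  ultimately show thesis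
    using that ac unfolding I_def by blast
qed

lemma measure_le_of_renyi_div_le:
  fixes P Q :: "'b measure"
  assumes "prob_space P" "prob_space Q" "sets P = sets Q"
    and "1 < \<alpha>" "0 < \<delta>" and renyi: "renyi_div \<alpha> P Q \<le> ereal D"
    and \<epsilon>: "D + ln (1 / \<delta>) / (\<alpha> - 1) \<le> \<epsilon>" and A: "A \<in> sets P"
  shows "measure P A \<le> exp \<epsilon> * measure Q A + \<delta>"
proof -
  interpret P: prob_space P by fact
  interpret Q: prob_space Q by fact
  have "renyi_div \<alpha> P Q \<noteq> \<infinity>"
    using renyi by auto
  then obtain D' where D': "renyi_div \<alpha> P Q = ereal D'" and ac: "absolutely_continuous Q P"
    and moment: "(\<integral>\<^sup>+x. ennreal (enn2real (RN_deriv Q P x) powr \<alpha>) \<partial>Q) \<le> ennreal (exp ((\<alpha> - 1) * D'))"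
    by (rule renyi_div_finiteE[OF assms(4)])
  have tail: "exp \<epsilon> powr (1 - \<alpha>) * exp ((\<alpha> - 1) * D') \<le> \<delta>"
  proof -
    have "(\<alpha> - 1) * (D + ln (1 / \<delta>) / (\<alpha> - 1)) \<le> (\<alpha> - 1) * \<epsilon>"
      using \<epsilon> assms(4) by (intro mult_left_mono) auto
    then have "(\<alpha> - 1) * D + ln (1 / \<delta>) \<le> (\<alpha> - 1) * \<epsilon>"
      using assms(4) by (simp add: distrib_left)
    moreover have "(\<alpha> - 1) * D' \<le> (\<alpha> - 1) * D"
      using renyi D' assms(4) by (intro mult_left_mono) auto
    ultimately have "(1 - \<alpha>) * \<epsilon> + (\<alpha> - 1) * D' \<le> - ln (1 / \<delta>)"
      by (simp add: algebra_simps)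
    then have "exp \<epsilon> powr (1 - \<alpha>) * exp ((\<alpha> - 1) * D') \<le> exp (- ln (1 / \<delta>))"
      by (simp add: powr_def flip: exp_add)
    also have "\<dots> = \<delta>"
      using assms(5) by (simp add: ln_div)
    finally show ?thesis .
  qed
  have "emeasure P A \<le> ennreal (exp \<epsilon>) * emeasure Q A
      + ennreal (exp \<epsilon> powr (1 - \<alpha>)) * (\<integral>\<^sup>+x. ennreal (enn2real (RN_deriv Q P x) powr \<alpha>) \<partial>Q)"
    using assms(1-4) ac A
    by (intro emeasure_le_threshold_plus_moment) (auto intro: prob_space_imp_sigma_finite)
  also have "\<dots> \<le> ennreal (exp \<epsilon>) * emeasure Q A
      + ennreal (exp \<epsilon> powr (1 - \<alpha>)) * ennreal (exp ((\<alpha> - 1) * D'))"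
    using moment by (intro add_left_mono mult_left_mono) auto
  also have "\<dots> = ennreal (exp \<epsilon> * measure Q A + exp \<epsilon> powr (1 - \<alpha>) * exp ((\<alpha> - 1) * D'))"
    by (simp add: Q.emeasure_eq_measure ennreal_mult ennreal_plus)
  also have "\<dots> \<le> ennreal (exp \<epsilon> * measure Q A + \<delta>)"
    using tail by (intro ennreal_leI) simp
  finally show ?thesis
    using assms(5) by (simp add: P.emeasure_eq_measure ennreal_le_iff del: ennreal_plus)
qed

lemma approx_max_div_le_renyi_div:
  fixes P Q :: "'b measure"
  assumes "prob_space P" "prob_space Q" "sets P = sets Q"
    and "1 < \<alpha>" "0 < \<delta>" "\<delta> \<le> 1"
  shows "e2ennreal (approx_max_div \<delta> P Q)
           \<le> e2ennreal (renyi_div \<alpha> P Q) + ennreal (ln (1 / \<delta>) / (\<alpha> - 1))"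
proof (cases "renyi_div \<alpha> P Q = \<infinity>")
  case True
  then show ?thesis by simp
next
  case False
  then obtain D where D: "renyi_div \<alpha> P Q = ereal D"
    using renyi_div_finiteE[OF assms(4)] by blast
  define c where "c = ln (1 / \<delta>) / (\<alpha> - 1)"
  have "0 \<le> c"
    unfolding c_def using assms(4-6) by simp
  \<comment> \<open>\<open>max 0 D\<close>, not \<open>D\<close>: \<open>approx_max_div\<close> only admits \<open>\<epsilon> \<ge> 0\<close>, and \<open>e2ennreal\<close> maps a negative \<open>D\<close> to \<open>0\<close>\<close>
  have "approx_max_div \<delta> P Q \<le> ereal (max 0 D + c)"
    unfolding approx_max_div_def using \<open>0 \<le> c\<close> assms D
    by (intro Inf_lower) (auto simp: c_def intro!: measure_le_of_renyi_div_le[where D = "max 0 D"])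
  then have "e2ennreal (approx_max_div \<delta> P Q) \<le> ennreal (max 0 D + c)"
    using e2ennreal_mono by fastforce
  also have "\<dots> = e2ennreal (renyi_div \<alpha> P Q) + ennreal c"
    using \<open>0 \<le> c\<close> by (simp add: D ennreal_plus max_def ennreal_neg)
  finally show ?thesis
    unfolding c_def .
qed

lemma enn2ereal_nn_integral_le_add_const:
  assumes "prob_space M" and "\<And>x. g x \<le> f x + ennreal c" and "0 \<le> c"
    and "enn2ereal (\<integral>\<^sup>+x. f x \<partial>M) \<le> ereal \<epsilon>"
  shows "enn2ereal (\<integral>\<^sup>+x. g x \<partial>M) \<le> ereal (\<epsilon> + c)"
proof -
  have "(\<integral>\<^sup>+x. g x \<partial>M) \<le> (\<integral>\<^sup>+x. f x + ennreal c \<partial>M)"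
    by (intro nn_integral_mono assms(2))
  also have "\<dots> \<le> (\<integral>\<^sup>+x. f x \<partial>M) + ennreal c"
    using nn_integral_add_const_le[where f=f and c="ennreal c" and M=M] assms(1)
    by (simp add: prob_space.emeasure_space_1)
  finally have "enn2ereal (\<integral>\<^sup>+x. g x \<partial>M) \<le> enn2ereal (\<integral>\<^sup>+x. f x \<partial>M) + ereal c"
    using assms(3) by (simp add: less_eq_ennreal.rep_eq plus_ennreal.rep_eq)
  also have "\<dots> \<le> ereal \<epsilon> + ereal c"
    using assms(4) by (rule add_right_mono)
  finally show ?thesis
    by simp
qed

lemma
  fixes \<theta> :: "('s \<times> 'x) measure" and M :: "'x \<Rightarrow> 'a::euclidean_space measure"
  assumes "prob_space \<theta>" and "{p \<in> space \<theta>. fst p = s} \<in> sets \<theta>" and "0 < secret_marg \<theta> s"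
    and kernel: "(\<lambda>p. M (snd p)) \<in> \<theta> \<rightarrow>\<^sub>M prob_algebra borel"
  shows prob_space_cond_out: "prob_space (cond_out \<theta> M s)"
    and sets_cond_out: "sets (cond_out \<theta> M s) = sets borel"
proof -
  let ?S = "{p \<in> space \<theta>. fst p = s}"
  interpret prob_space \<theta> by fact
  have "emeasure \<theta> ?S \<noteq> 0" "emeasure \<theta> ?S \<noteq> \<infinity>"
    using assms(3) unfolding secret_marg_def by (auto simp: emeasure_eq_measure)
  then have "prob_space (uniform_measure \<theta> ?S)"
    by (rule prob_space_uniform_measure)
  then have S: "uniform_measure \<theta> ?S \<in> space (prob_algebra \<theta>)"
    by (simp add: space_prob_algebra)
  show "prob_space (cond_out \<theta> M s)" "sets (cond_out \<theta> M s) = sets borel"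
    unfolding cond_out_def using prob_space_bind'[OF S kernel] sets_bind'[OF S kernel] by simp_all
qed

lemma
  fixes N :: "'a::euclidean_space measure"
  assumes "prob_space N" and "sets N = sets borel"
  shows prob_space_slice_push: "prob_space (slice_push u N)"
    and sets_slice_push: "sets (slice_push u N) = sets borel"
proof -
  have "(\<lambda>a. a \<bullet> u) \<in> N \<rightarrow>\<^sub>M borel"
    using assms(2) by (simp cong: measurable_cong_sets)
  then show "prob_space (slice_push u N)"
    unfolding slice_push_def by (rule prob_space.prob_space_distr[OF assms(1)])
  show "sets (slice_push u N) = sets borel"
    unfolding slice_push_def by simp
qed

theorem theorem8:
  fixes \<alpha> \<epsilon> \<delta> :: real
    and Q :: "('s \<times> 's) set"
    and \<Theta> :: "('s \<times> 'x) measure set"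
    and U :: "'a::euclidean_space set"
    and \<omega> :: "'a measure"
    and M :: "'x \<Rightarrow> 'a measure"
  assumes "\<alpha> > 1"
    and priors: "\<And>\<theta> s. \<theta> \<in> \<Theta> \<Longrightarrow> prob_space \<theta> \<and> {p \<in> space \<theta>. fst p = s} \<in> sets \<theta>"
    and kernel: "\<And>\<theta>. \<theta> \<in> \<Theta> \<Longrightarrow> (\<lambda>p. M (snd p)) \<in> \<theta> \<rightarrow>\<^sub>M prob_algebra borel"
    and "U \<subseteq> sphere 0 1"
    and "prob_space \<omega>" and "sets \<omega> = sets borel" and "AE u in \<omega>. u \<in> U"
    and "ave_SRPP \<alpha> \<epsilon> \<omega> Q \<Theta> M"
    and "0 < \<delta>" and "\<delta> < 1"
  shows "ave_SPP (\<epsilon> + ln (1 / \<delta>) / (\<alpha> - 1)) \<delta> \<omega> Q \<Theta> M"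
  unfolding ave_SPP_def
proof (intro ballI impI, clarify)
  fix \<theta> si sj
  assume \<theta>: "\<theta> \<in> \<Theta>" and "(si, sj) \<in> Q" and si: "0 < secret_marg \<theta> si" and sj: "0 < secret_marg \<theta> sj"
  define Pi where "Pi u = slice_push u (cond_out \<theta> M si)" for u
  define Pj where "Pj u = slice_push u (cond_out \<theta> M sj)" for u
  have srpp: "enn2ereal (\<integral>\<^sup>+u. e2ennreal (renyi_div \<alpha> (Pi u) (Pj u)) \<partial>\<omega>) \<le> ereal \<epsilon>"
    using \<open>ave_SRPP \<alpha> \<epsilon> \<omega> Q \<Theta> M\<close> \<theta> \<open>(si, sj) \<in> Q\<close> si sj
    unfolding ave_SRPP_def Pi_def Pj_def by auto
  have cond: "prob_space (cond_out \<theta> M s) \<and> sets (cond_out \<theta> M s) = sets borel"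
    if "0 < secret_marg \<theta> s" for s
    using priors[OF \<theta>, of s] kernel[OF \<theta>] that by (simp add: prob_space_cond_out sets_cond_out)
  have "prob_space (Pi u)" "prob_space (Pj u)" "sets (Pi u) = sets (Pj u)" for u
    unfolding Pi_def Pj_def using cond[OF si] cond[OF sj]
    by (simp_all add: prob_space_slice_push sets_slice_push)
  then have pointwise: "e2ennreal (approx_max_div \<delta> (Pi u) (Pj u))
      \<le> e2ennreal (renyi_div \<alpha> (Pi u) (Pj u)) + ennreal (ln (1 / \<delta>) / (\<alpha> - 1))" for u
    using assms(1,9,10) by (intro approx_max_div_le_renyi_div) simp_all
  have shift: "0 \<le> ln (1 / \<delta>) / (\<alpha> - 1)"
    using assms(1,9,10) by simp
  show "enn2ereal (\<integral>\<^sup>+u. e2ennreal (approx_max_div \<delta> (slice_push u (cond_out \<theta> M si))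
                                  (slice_push u (cond_out \<theta> M sj))) \<partial>\<omega>)
      \<le> ereal (\<epsilon> + ln (1 / \<delta>) / (\<alpha> - 1))"
    unfolding Pi_def[symmetric] Pj_def[symmetric]
    by (rule enn2ereal_nn_integral_le_add_const[OF \<open>prob_space \<omega>\<close> pointwise shift srpp])
qed

end
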